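(* Assume source and target traces are related via ${\sim}=\langle \overset{\circ}{\sim},\overset{\bullet}{\sim}\rangle$, i.e. $s\sim t\iff s^\circ\overset{\circ}{\sim}t^\circ \wedge s^\bullet\overset{\bullet}{\sim}t^\bullet$, where $\overset{\circ}{\sim}$ is a total and surjective map from target to source input projections and $\overset{\bullet}{\sim}$ is an arbitrary relation between source and target output projections. Assume the compilation chain satisfies $\mathit{CC}^{\sim}$, and let $\phi_S\in\mathit{uco}(2^{\mathit{Trace}_S^\circ})$ and $\rho_S\in\mathit{uco}(2^{\mathit{Trace}_S^\bullet})$. Let $\phi_T^\#=g^\circ\circ\phi_S\circ f^\circ$ with $f^\circ(\pi_T^\circ)=\{s^\circ\mid\exists t^\circ\in\pi_T^\circ.\ s^\circ\overset{\circ}{\sim}t^\circ\}$ and $g^\circ(\pi_S^\circ)=\{t^\circ\mid\forall s^\circ.\ s^\circ\overset{\circ}{\sim}t^\circ\Rightarrow s^\circ\in\pi_S^\circ\}$, and let $\rho_T^\#$ be any map on sets of target output projections such that for all $s$ and $t$, $s^\bullet\overset{\bullet}{\sim}t^\bullet$ implies $\rho_T^\#(t^\bullet)=\rho_T^\#(\tilde\tau^\bullet(\rho_S(s^\bullet)))$. If a source program $W$ satisfies $\mathit{ANI}[\phi_S,\rho_S]$, then $W{\downarrow}$ satisfies $\mathit{ANI}[\phi_T^\#,\rho_T^\#]$.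
   Context: A compilation chain consists of source (whole) programs $W$, target programs, sets $\mathit{Trace}_S,\mathit{Trace}_T$ of source and target traces, semantics relations $W\rightsquigarrow t$ at both levels, and a compiler $W\mapsto W{\downarrow}$; $\mathit{beh}(W)=\{t\mid W\rightsquigarrow t\}$, and $W$ satisfies a hyperproperty $H$ iff $\mathit{beh}(W)\in H$. $\mathit{CC}^{\sim}$ states: for every $W$ and $t$, if $W{\downarrow}\rightsquigarrow t$ then there is $s\sim t$ with $W\rightsquigarrow s$. Each trace $t$ has a disjoint input projection $t^\circ$ and output projection $t^\bullet$; $\mathit{Trace}^\circ,\mathit{Trace}^\bullet$ denote the sets of input and output projections. "Total and surjective map from target to source" means every target input projection is related to exactly one source input projection and every source input projection is related to some target one. $\tilde\tau^\bullet(\pi)=\{t^\bullet\mid\exists s^\bullet\in\pi.\ s^\bullet\overset{\bullet}{\sim}t^\bullet\}$ is the existential image of $\overset{\bullet}{\sim}$. An upper closure operator ($\mathit{uco}$) on a powerset is a monotone, idempotent, extensive map. $\mathit{ANI}[\phi,\rho]=\{\pi\mid\forall t_1,t_2\in\pi.\ \phi(t_1^\circ)=\phi(t_2^\circ)\Rightarrow\rho(t_1^\bullet)=\rho(t_2^\bullet)\}$, where $\phi(x)$ abbreviates $\phi(\{x\})$ and similarly for $\rho$. *)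

theory Defs
  imports Main
begin

definition beh :: "('w \<Rightarrow> 'tr \<Rightarrow> bool) \<Rightarrow> 'w \<Rightarrow> 'tr set" where
  "beh sem W = {t. sem W t}"

definition sat :: "('w \<Rightarrow> 'tr \<Rightarrow> bool) \<Rightarrow> 'w \<Rightarrow> 'tr set set \<Rightarrow> bool" where
  "sat sem W H \<longleftrightarrow> beh sem W \<in> H"

definition CC :: "('w \<Rightarrow> 's \<Rightarrow> bool) \<Rightarrow> ('p \<Rightarrow> 't \<Rightarrow> bool) \<Rightarrow> ('w \<Rightarrow> 'p)
                  \<Rightarrow> ('s \<Rightarrow> 't \<Rightarrow> bool) \<Rightarrow> bool" where
  "CC semS semT cmp sim \<longleftrightarrow>
     (\<forall>W t. semT (cmp W) t \<longrightarrow> (\<exists>s. sim s t \<and> semS W s))"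

definition uco_on :: "'a set \<Rightarrow> ('a set \<Rightarrow> 'a set) \<Rightarrow> bool" where
  "uco_on A f \<longleftrightarrow>
     (\<forall>X. X \<subseteq> A \<longrightarrow> f X \<subseteq> A) \<and>
     (\<forall>X Y. X \<subseteq> A \<longrightarrow> Y \<subseteq> A \<longrightarrow> X \<subseteq> Y \<longrightarrow> f X \<subseteq> f Y) \<and>
     (\<forall>X. X \<subseteq> A \<longrightarrow> f (f X) = f X) \<and>
     (\<forall>X. X \<subseteq> A \<longrightarrow> X \<subseteq> f X)"

definition ANI :: "('tr \<Rightarrow> 'i) \<Rightarrow> ('tr \<Rightarrow> 'o) \<Rightarrow> ('i set \<Rightarrow> 'i set) \<Rightarrow> ('o set \<Rightarrow> 'o set)
                   \<Rightarrow> 'tr set set" where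
  "ANI inp out \<phi> \<rho> = {\<pi>. \<forall>t1\<in>\<pi>. \<forall>t2\<in>\<pi>.
       \<phi> {inp t1} = \<phi> {inp t2} \<longrightarrow> \<rho> {out t1} = \<rho> {out t2}}"

definition f_in :: "('si \<Rightarrow> 'ti \<Rightarrow> bool) \<Rightarrow> 'ti set \<Rightarrow> 'si set" where
  "f_in rin \<pi>T = {si. \<exists>ti\<in>\<pi>T. rin si ti}"

(* g^o: universal preimage; TI is the set Trace_T^o of target input projections *)
definition g_in :: "'ti set \<Rightarrow> ('si \<Rightarrow> 'ti \<Rightarrow> bool) \<Rightarrow> 'si set \<Rightarrow> 'ti set" where
  "g_in TI rin \<pi>S = {ti. ti \<in> TI \<and> (\<forall>si. rin si ti \<longrightarrow> si \<in> \<pi>S)}"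

definition tau_out :: "('so \<Rightarrow> 'to \<Rightarrow> bool) \<Rightarrow> 'so set \<Rightarrow> 'to set" where
  "tau_out rout \<pi> = {to. \<exists>so\<in>\<pi>. rout so to}"

end

theory Submission
  imports Defs
begin

text \<open>Each target trace of the compiled program is matched by a source trace of the program,
  and a target input determines its source input uniquely, so \<open>f\<^sup>\<circ>\<close> sends a singleton of
  target inputs to the singleton of the matching source input. Surjectivity makes \<open>g\<^sup>\<circ>\<close>
  injective on sets of source inputs, so equal abstract target inputs give equal abstract
  source inputs; source noninterference then equates the abstract source outputs, and the
  hypothesis on \<open>\<rho>\<^sub>T\<^sup>#\<close> transports this equality to the target outputs.\<close>

lemma CC_beh:
  assumes "CC semS semT cmp sim" and "t \<in> beh semT (cmp W)"
  obtains s where "s \<in> beh semS W" and "sim s t"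
  using assms unfolding CC_def beh_def by blast

lemma ANI_transfer:
  assumes src: "\<pi>S \<in> ANI inS outS \<phi>S \<rho>S"
    and match: "\<And>t. t \<in> \<pi>T \<Longrightarrow> \<exists>s\<in>\<pi>S. R s t"
    and reflect_in: "\<And>s1 t1 s2 t2. R s1 t1 \<Longrightarrow> R s2 t2 \<Longrightarrow>
        \<phi>T {inT t1} = \<phi>T {inT t2} \<Longrightarrow> \<phi>S {inS s1} = \<phi>S {inS s2}"
    and preserve_out: "\<And>s1 t1 s2 t2. R s1 t1 \<Longrightarrow> R s2 t2 \<Longrightarrow>
        \<rho>S {outS s1} = \<rho>S {outS s2} \<Longrightarrow> \<rho>T {outT t1} = \<rho>T {outT t2}"
  shows "\<pi>T \<in> ANI inT outT \<phi>T \<rho>T"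
  unfolding ANI_def
proof (intro CollectI ballI impI)
  fix t1 t2 assume "t1 \<in> \<pi>T" "t2 \<in> \<pi>T" and eq_in: "\<phi>T {inT t1} = \<phi>T {inT t2}"
  then obtain s1 s2 where "s1 \<in> \<pi>S" "R s1 t1" "s2 \<in> \<pi>S" "R s2 t2"
    using match by blast
  moreover from this eq_in have "\<phi>S {inS s1} = \<phi>S {inS s2}"
    by (intro reflect_in)
  ultimately have "\<rho>S {outS s1} = \<rho>S {outS s2}"
    using src unfolding ANI_def by blast
  with \<open>R s1 t1\<close> \<open>R s2 t2\<close> show "\<rho>T {outT t1} = \<rho>T {outT t2}"
    by (rule preserve_out)
qed

lemma f_in_singleton:
  assumes "rin si ti" and "\<And>si'. rin si' ti \<Longrightarrow> si' = si"
  shows "f_in rin {ti} = {si}"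
  using assms unfolding f_in_def by blast

lemma g_in_subset_reflect:
  assumes witness: "\<And>si. si \<in> S \<Longrightarrow> \<exists>ti\<in>TI. rin si ti \<and> (\<forall>si'. rin si' ti \<longrightarrow> si' = si)"
    and "X \<subseteq> S" and "g_in TI rin X \<subseteq> g_in TI rin Y"
  shows "X \<subseteq> Y"
proof
  fix si assume "si \<in> X"
  with \<open>X \<subseteq> S\<close> have "si \<in> S" by auto
  then obtain ti where "ti \<in> TI" "rin si ti" "\<forall>si'. rin si' ti \<longrightarrow> si' = si"
    using witness by blast
  with \<open>si \<in> X\<close> have "ti \<in> g_in TI rin X"
    unfolding g_in_def by blast
  with \<open>g_in TI rin X \<subseteq> g_in TI rin Y\<close> \<open>rin si ti\<close> show "si \<in> Y"
    unfolding g_in_def by auto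
qed

lemma g_in_inj_on:
  assumes "\<And>si. si \<in> S \<Longrightarrow> \<exists>ti\<in>TI. rin si ti \<and> (\<forall>si'. rin si' ti \<longrightarrow> si' = si)"
  shows "inj_on (g_in TI rin) (Pow S)"
proof (rule inj_onI)
  fix X Y assume "X \<in> Pow S" "Y \<in> Pow S" and eq: "g_in TI rin X = g_in TI rin Y"
  show "X = Y"
  proof (rule subset_antisym)
    show "X \<subseteq> Y"
      by (rule g_in_subset_reflect[OF assms]) (use \<open>X \<in> Pow S\<close> eq in auto)
    show "Y \<subseteq> X"
      by (rule g_in_subset_reflect[OF assms]) (use \<open>Y \<in> Pow S\<close> eq in auto)
  qed
qed

lemma uco_on_closed: "uco_on A f \<Longrightarrow> X \<subseteq> A \<Longrightarrow> f X \<subseteq> A"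
  by (simp add: uco_on_def)

lemma abstract_output_eq_transfer:
  assumes "\<forall>s t. rout (outS s) (outT t) \<longrightarrow> \<rho>T {outT t} = \<rho>T (tau_out rout (\<rho>S {outS s}))"
    and "rout (outS s1) (outT t1)" "rout (outS s2) (outT t2)"
    and "\<rho>S {outS s1} = \<rho>S {outS s2}"
  shows "\<rho>T {outT t1} = \<rho>T {outT t2}"
proof -
  have "\<rho>T {outT t1} = \<rho>T (tau_out rout (\<rho>S {outS s1}))"
    using assms(1,2) by blast
  also have "\<dots> = \<rho>T (tau_out rout (\<rho>S {outS s2}))"
    using assms(4) by simp
  also have "\<dots> = \<rho>T {outT t2}"
    using assms(1,3) by metis
  finally show ?thesis .
qed

theorem theorem4p2:
  fixes semS :: "'w \<Rightarrow> 's \<Rightarrow> bool" and semT :: "'p \<Rightarrow> 't \<Rightarrow> bool"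
    and cmp :: "'w \<Rightarrow> 'p"
    and inS :: "'s \<Rightarrow> 'si" and outS :: "'s \<Rightarrow> 'so"
    and inT :: "'t \<Rightarrow> 'ti" and outT :: "'t \<Rightarrow> 'to"
    and rin :: "'si \<Rightarrow> 'ti \<Rightarrow> bool" and rout :: "'so \<Rightarrow> 'to \<Rightarrow> bool"
    and \<phi>S :: "'si set \<Rightarrow> 'si set" and \<rho>S :: "'so set \<Rightarrow> 'so set"
    and \<rho>T :: "'to set \<Rightarrow> 'to set"
    and W :: 'w
  assumes rin_dom: "\<And>si ti. rin si ti \<Longrightarrow> si \<in> range inS \<and> ti \<in> range inT"
    and rin_total: "\<forall>ti\<in>range inT. \<exists>!si. si \<in> range inS \<and> rin si ti"
    and rin_surj: "\<forall>si\<in>range inS. \<exists>ti\<in>range inT. rin si ti"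
    and rout_dom: "\<And>so to. rout so to \<Longrightarrow> so \<in> range outS \<and> to \<in> range outT"
    and cc: "CC semS semT cmp (\<lambda>s t. rin (inS s) (inT t) \<and> rout (outS s) (outT t))"
    and uco_phi: "uco_on (range inS) \<phi>S"
    and uco_rho: "uco_on (range outS) \<rho>S"
    and rhoT: "\<forall>s t. rout (outS s) (outT t) \<longrightarrow>
                 \<rho>T {outT t} = \<rho>T (tau_out rout (\<rho>S {outS s}))"
    and src: "sat semS W (ANI inS outS \<phi>S \<rho>S)"
  shows "sat semT (cmp W)
           (ANI inT outT (g_in (range inT) rin \<circ> \<phi>S \<circ> f_in rin) \<rho>T)"
proof -
  have unique_src: "si' = si" if "rin si ti" "rin si' ti" for si si' ti
    using that rin_dom rin_total by blast
  have "inj_on (g_in (range inT) rin) (Pow (range inS))"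
    using rin_surj unique_src by (intro g_in_inj_on) blast
  moreover have "\<phi>S {inS s} \<in> Pow (range inS)" for s
    using uco_on_closed[OF uco_phi] by blast
  ultimately have reflect_in: "\<phi>S {inS s1} = \<phi>S {inS s2}"
    if "rin (inS s1) (inT t1)" "rin (inS s2) (inT t2)"
      "(g_in (range inT) rin \<circ> \<phi>S \<circ> f_in rin) {inT t1}
         = (g_in (range inT) rin \<circ> \<phi>S \<circ> f_in rin) {inT t2}" for s1 t1 s2 t2
    using that f_in_singleton[of rin, OF _ unique_src] by (simp add: inj_on_eq_iff)
  show ?thesis
    using src unfolding sat_def
  proof (rule ANI_transfer[where R = "\<lambda>s t. rin (inS s) (inT t) \<and> rout (outS s) (outT t)"])
    show "\<exists>s\<in>beh semS W. rin (inS s) (inT t) \<and> rout (outS s) (outT t)"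
      if "t \<in> beh semT (cmp W)" for t
      using CC_beh[OF cc that] by blast
  qed (use reflect_in abstract_output_eq_transfer[OF rhoT] in blast)+
qed

end
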